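(* Let $\kappa=(a,b,0,0)\in[-2,2]^4$. Then each level set $X_\kappa(x)\subset E_\kappa$ is an ellipse (possibly degenerate) centered at $(x,0,0)$. Consequently $Y_\kappa(0)$ and $Z_\kappa(0)$ intersect every ellipse $X_\kappa(x)$.
   Context: Let $M$ be a four-holed sphere with $\pi_1(M)=\langle A,B,C,D:ABCD=I\rangle$, $A,B,C,D$ the boundary classes, and set $X=AB$, $Y=BC$, $Z=CA$. For $\kappa=(a,b,c,d)\in[-2,2]^4$, $E_\kappa\subset\mathbb R^3$ is the set of triples $(\operatorname{tr}\rho(X),\operatorname{tr}\rho(Y),\operatorname{tr}\rho(Z))$ for $[\rho]\in\operatorname{Hom}(\pi_1(M),\mathrm{SU}(2))/\mathrm{SU}(2)$ with boundary traces $(\operatorname{tr}\rho(A),\operatorname{tr}\rho(B),\operatorname{tr}\rho(C),\operatorname{tr}\rho(D))=\kappa$; it lies in the surface $x^2+y^2+z^2+xyz=(ab+cd)x+(ad+bc)y+(ac+bd)z-(a^2+b^2+c^2+d^2+abcd-4)$. The level sets are $X_\kappa(x)=\{(x',y',z')\in E_\kappa:x'=x\}$, $Y_\kappa(y)=\{(x',y',z')\in E_\kappa:y'=y\}$, $Z_\kappa(z)=\{(x',y',z')\in E_\kappa:z'=z\}$. *)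

theory Defs
  imports "HOL-Analysis.Analysis"
begin

definition conj_transpose :: "complex^'n^'n \<Rightarrow> complex^'n^'n" where
  "conj_transpose M = (\<chi> i j. cnj (M $ j $ i))"

definition SU2 :: "(complex^2^2) set" where
  "SU2 = {M. M ** conj_transpose M = mat 1 \<and> det M = 1}"

text \<open>E_kappa: trace triples (tr rho(AB), tr rho(BC), tr rho(CA)) over representations
  rho of <A,B,C,D | ABCD = I> into SU(2) with boundary traces kappa = (a,b,c,d).
  A representation is given by the images A,B,C,D of the generators.\<close>
definition E_kappa :: "real \<times> real \<times> real \<times> real \<Rightarrow> (real \<times> real \<times> real) set" where
  "E_kappa \<kappa> = (case \<kappa> of (a, b, c, d) \<Rightarrow>
     {(x, y, z). \<exists>A\<in>SU2. \<exists>B\<in>SU2. \<exists>C\<in>SU2. \<exists>D\<in>SU2.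
        A ** B ** C ** D = mat 1 \<and>
        trace A = complex_of_real a \<and> trace B = complex_of_real b \<and>
        trace C = complex_of_real c \<and> trace D = complex_of_real d \<and>
        trace (A ** B) = complex_of_real x \<and> trace (B ** C) = complex_of_real y \<and>
        trace (C ** A) = complex_of_real z})"

definition X_level :: "real \<times> real \<times> real \<times> real \<Rightarrow> real \<Rightarrow> (real \<times> real \<times> real) set" where
  "X_level \<kappa> x = {p \<in> E_kappa \<kappa>. fst p = x}"

definition Y_level :: "real \<times> real \<times> real \<times> real \<Rightarrow> real \<Rightarrow> (real \<times> real \<times> real) set" where
  "Y_level \<kappa> y = {p \<in> E_kappa \<kappa>. fst (snd p) = y}"

definition Z_level :: "real \<times> real \<times> real \<times> real \<Rightarrow> real \<Rightarrow> (real \<times> real \<times> real) set" where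
  "Z_level \<kappa> z = {p \<in> E_kappa \<kappa>. snd (snd p) = z}"

text \<open>A (possibly degenerate) ellipse centered at c: the image of the unit circle under
  an affine map t \<mapsto> c + cos t u + sin t v (u, v arbitrary, possibly dependent or zero,
  so points and segments are the degenerate cases).\<close>
definition ellipse_centered :: "(real \<times> real \<times> real) set \<Rightarrow> real \<times> real \<times> real \<Rightarrow> bool" where
  "ellipse_centered S c \<longleftrightarrow>
     (\<exists>u v. S = (\<lambda>t. c + cos t *\<^sub>R u + sin t *\<^sub>R v) ` UNIV)"

end

theory Submission
  imports Defs
begin

(* Identify SU(2) with the unit quaternions q + v (q real, v in R^3), so that tr = 2 q. For
   kappa = (a, b, 0, 0) a representation is A = a/2 + alpha, B = b/2 + beta, C = c with |c| = 1,
   subject only to Re (A B C) = 0 (so that D = (A B C)^-1 has trace 0), which says that c is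
   orthogonal to Im (A B). The traces are x = a b/2 - 2 alpha.beta, y = -2 beta.c, z = -2 c.alpha.

   The Gram determinant of alpha, beta, c turns the constraint into
   y^2 + z^2 + x y z = a b x - x^2 - a^2 - b^2 + 4 = 4 |alpha x beta|^2. Conversely, if
   alpha x beta is nonzero, the inner products of c with the basis alpha, beta, alpha x beta can be
   prescribed freely, and the same identity shows that c is a unit vector exactly on this conic.
   So for |x| < 2 the level set is the whole conic, an ellipse centred at (x, 0, 0) that meets both
   coordinate axes. For |x| = 2 the vectors alpha and beta are parallel, and the level set is the
   segment swept out by c.alpha, which passes through (x, 0, 0). *)

unbundle cross3_syntax

lemma abs_le_imp_eq_scaled_cos:
  fixes w \<rho> :: real
  assumes "\<bar>w\<bar> \<le> \<rho>"
  shows "\<exists>t. w = \<rho> * cos t"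
proof (cases "\<rho> = 0")
  case True
  with assms show ?thesis by simp
next
  case False
  with assms have "\<rho> > 0" using abs_ge_zero[of w] by linarith
  with assms have "\<bar>w / \<rho>\<bar> \<le> 1" by (simp add: abs_divide)
  then have "\<rho> * cos (arccos (w / \<rho>)) = w" using False by (simp add: cos_arccos_abs)
  then show ?thesis by metis
qed

lemma power2_less_4_imp:
  fixes x :: real
  assumes "x\<^sup>2 < 4"
  shows "2 + x > 0" and "2 - x > 0"
proof -
  have "\<not> \<bar>2\<bar> \<le> \<bar>x\<bar>" using abs_le_square_iff[of 2 x] assms by simp
  then show "2 + x > 0" "2 - x > 0" by auto
qed

lemma cubic_slice_diagonal_form:
  fixes x y z :: real
  shows "(2 + x) * (y + z)\<^sup>2 + (2 - x) * (y - z)\<^sup>2 = 4 * (y\<^sup>2 + z\<^sup>2 + x * y * z)"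
  by (simp add: power2_eq_square algebra_simps)

lemma cubic_slice_zero:
  fixes x y z :: real
  assumes "x\<^sup>2 < 4" and "y\<^sup>2 + z\<^sup>2 + x * y * z = 0"
  shows "y = 0" and "z = 0"
proof -
  have pos: "2 + x > 0" "2 - x > 0" using power2_less_4_imp[OF assms(1)] .
  then have "(2 + x) * (y + z)\<^sup>2 \<ge> 0" "(2 - x) * (y - z)\<^sup>2 \<ge> 0" by simp_all
  moreover have "(2 + x) * (y + z)\<^sup>2 + (2 - x) * (y - z)\<^sup>2 = 0"
    using assms(2) by (simp add: cubic_slice_diagonal_form)
  ultimately have "(2 + x) * (y + z)\<^sup>2 = 0" "(2 - x) * (y - z)\<^sup>2 = 0" by linarith+
  then have "y + z = 0" "y - z = 0" using pos by simp_all
  then show "y = 0" "z = 0" by linarith+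
qed

lemma cubic_slice_ellipse:
  fixes x K :: real
  assumes "x\<^sup>2 < 4" and "K \<ge> 0"
  shows "{(x, y, z) | y z. y\<^sup>2 + z\<^sup>2 + x * y * z = K} =
    (\<lambda>t. (x, 0, 0) + cos t *\<^sub>R (0, sqrt (K / (2 + x)), sqrt (K / (2 + x)))
                  + sin t *\<^sub>R (0, sqrt (K / (2 - x)), - sqrt (K / (2 - x)))) ` UNIV"
proof -
  define P where "P = sqrt (K / (2 + x))"
  define R where "R = sqrt (K / (2 - x))"
  have "2 + x > 0" "2 - x > 0" using power2_less_4_imp[OF assms(1)] .
  then have P2: "P\<^sup>2 = K / (2 + x)" and R2: "R\<^sup>2 = K / (2 - x)"
    using \<open>K \<ge> 0\<close> by (simp_all add: P_def R_def)
  then have P: "(2 + x) * P\<^sup>2 = K" and R: "(2 - x) * R\<^sup>2 = K"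
    using \<open>2 + x > 0\<close> \<open>2 - x > 0\<close> by simp_all
  have param: "(\<lambda>t. (x, 0, 0) + cos t *\<^sub>R (0, P, P) + sin t *\<^sub>R (0, R, - R))
      = (\<lambda>t. (x, P * cos t + R * sin t, P * cos t - R * sin t))"
    by (auto simp: algebra_simps)
  have on_slice: "(P * cos t + R * sin t)\<^sup>2 + (P * cos t - R * sin t)\<^sup>2
      + x * (P * cos t + R * sin t) * (P * cos t - R * sin t) = K" for t
  proof -
    have "(P * cos t + R * sin t)\<^sup>2 + (P * cos t - R * sin t)\<^sup>2
        + x * (P * cos t + R * sin t) * (P * cos t - R * sin t)
        = ((2 + x) * P\<^sup>2) * (cos t)\<^sup>2 + ((2 - x) * R\<^sup>2) * (sin t)\<^sup>2"
      by (simp add: power2_eq_square algebra_simps)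
    also have "\<dots> = K" unfolding P R by (simp flip: distrib_left)
    finally show ?thesis .
  qed
  have "\<exists>t. y = P * cos t + R * sin t \<and> z = P * cos t - R * sin t"
    if on_cubic: "y\<^sup>2 + z\<^sup>2 + x * y * z = K" for y z
  proof (cases "K = 0")
    case True
    then show ?thesis
      using cubic_slice_zero[OF \<open>x\<^sup>2 < 4\<close>, of y z] on_cubic by (simp add: P_def R_def)
  next
    case False
    then have "P > 0" "R > 0"
      using \<open>K \<ge> 0\<close> \<open>2 + x > 0\<close> \<open>2 - x > 0\<close> by (simp_all add: P_def R_def)
    have "((y + z) / (2 * P))\<^sup>2 = (2 + x) * (y + z)\<^sup>2 / (4 * K)"
      using False \<open>2 + x > 0\<close> unfolding power_divide power_mult_distrib P2 by (simp add: field_simps)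
    moreover have "((y - z) / (2 * R))\<^sup>2 = (2 - x) * (y - z)\<^sup>2 / (4 * K)"
      using False \<open>2 - x > 0\<close> unfolding power_divide power_mult_distrib R2 by (simp add: field_simps)
    ultimately have "((y + z) / (2 * P))\<^sup>2 + ((y - z) / (2 * R))\<^sup>2
        = ((2 + x) * (y + z)\<^sup>2 + (2 - x) * (y - z)\<^sup>2) / (4 * K)"
      by (simp add: add_divide_distrib)
    also have "\<dots> = 1"
      using False on_cubic by (simp add: cubic_slice_diagonal_form)
    finally obtain t where "(y + z) / (2 * P) = cos t" "(y - z) / (2 * R) = sin t"
      using sincos_total_2pi by metis
    then show ?thesis
      using \<open>P > 0\<close> \<open>R > 0\<close> by (intro exI[of _ t]) (simp add: field_simps)
  qed
  then show ?thesis
    unfolding P_def[symmetric] R_def[symmetric] param using on_slice by fastforce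
qed

lemma gram_det_cross3:
  "(c \<bullet> c) * ((\<alpha> \<bullet> \<alpha>) * (\<beta> \<bullet> \<beta>) - (\<alpha> \<bullet> \<beta>)\<^sup>2) =
     (\<beta> \<bullet> \<beta>) * (c \<bullet> \<alpha>)\<^sup>2 - 2 * (\<alpha> \<bullet> \<beta>) * (c \<bullet> \<alpha>) * (c \<bullet> \<beta>) + (\<alpha> \<bullet> \<alpha>) * (c \<bullet> \<beta>)\<^sup>2
     + (c \<bullet> (\<alpha> \<times> \<beta>))\<^sup>2"
  by (simp add: inner_vec_def sum_3 cross3_def power2_eq_square) algebra

lemma inner_cross3_self: "(\<alpha> \<times> \<beta>) \<bullet> (\<alpha> \<times> \<beta>) = (\<alpha> \<bullet> \<alpha>) * (\<beta> \<bullet> \<beta>) - (\<alpha> \<bullet> \<beta>)\<^sup>2"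
  using norm_cross[of \<alpha> \<beta>] by (simp add: power2_norm_eq_inner)

lemma exists_unit_orthogonal2:
  fixes u v :: "real^3"
  shows "\<exists>c. c \<bullet> c = 1 \<and> c \<bullet> u = 0 \<and> c \<bullet> v = 0"
proof -
  have "dim {u, v} \<le> card {u, v}" by (rule dim_le_card') simp
  also have "\<dots> \<le> 2" by (simp add: card_insert_if)
  also have "\<dots> < DIM(real^3)" by simp
  finally obtain w where "w \<noteq> 0" and w: "\<And>y. y \<in> span {u, v} \<Longrightarrow> orthogonal w y"
    using orthogonal_to_subspace_exists by blast
  then have "w \<bullet> u = 0" "w \<bullet> v = 0"
    by (auto simp: orthogonal_def span_base)
  with \<open>w \<noteq> 0\<close> show ?thesis
    by (intro exI[of _ "(1 / norm w) *\<^sub>R w"]) (simp add: power2_norm_eq_inner[symmetric] power2_eq_square)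
qed

lemma exists_unit_inner_eq:
  fixes \<alpha> :: "real^3"
  assumes "\<bar>w\<bar> \<le> norm \<alpha>"
  shows "\<exists>c. c \<bullet> c = 1 \<and> c \<bullet> \<alpha> = w"
proof -
  obtain u where u: "u \<bullet> u = 1" "u \<bullet> \<alpha> = 0"
    using exists_unit_orthogonal2 by blast
  show ?thesis
  proof (cases "\<alpha> = 0")
    case True
    then show ?thesis using assms u by auto
  next
    case False
    define \<rho> where "\<rho> = norm \<alpha>"
    have "\<rho> > 0" "\<alpha> \<bullet> \<alpha> = \<rho>\<^sup>2" using False by (simp_all add: \<rho>_def power2_norm_eq_inner)
    moreover have "w\<^sup>2 \<le> \<rho>\<^sup>2" using assms abs_le_square_iff[of w \<rho>] by (simp add: \<rho>_def)
    ultimately have *: "(w / \<rho>)\<^sup>2 + (sqrt (1 - (w / \<rho>)\<^sup>2))\<^sup>2 = 1"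
      by (simp add: power_divide)
    define c where "c = (w / \<rho>\<^sup>2) *\<^sub>R \<alpha> + sqrt (1 - (w / \<rho>)\<^sup>2) *\<^sub>R u"
    have "c \<bullet> \<alpha> = w" using \<open>\<rho> > 0\<close> \<open>\<alpha> \<bullet> \<alpha> = \<rho>\<^sup>2\<close> u
      by (simp add: c_def inner_add_left)
    moreover have "c \<bullet> c = 1" using * \<open>\<rho> > 0\<close> \<open>\<alpha> \<bullet> \<alpha> = \<rho>\<^sup>2\<close> u
      by (simp add: c_def inner_add_left inner_add_right inner_commute power_divide power2_eq_square)
    ultimately show ?thesis by blast
  qed
qed

lemma exists_inner_eq_cross3_basis:
  assumes "\<alpha> \<times> \<beta> \<noteq> 0"
  shows "\<exists>c. c \<bullet> \<alpha> = r \<and> c \<bullet> \<beta> = s \<and> c \<bullet> (\<alpha> \<times> \<beta>) = t"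
proof -
  define n where "n = \<alpha> \<times> \<beta>"
  define N where "N = n \<bullet> n"
  have "N \<noteq> 0" using assms by (simp add: N_def n_def)
  have "(\<beta> \<times> n) \<bullet> \<alpha> = N" "(n \<times> \<alpha>) \<bullet> \<beta> = N"
    using cross_triple[of \<beta> n \<alpha>] cross_triple[of n \<alpha> \<beta>] by (simp_all add: N_def flip: n_def)
  moreover have "(n \<times> \<alpha>) \<bullet> \<alpha> = 0" "(\<beta> \<times> n) \<bullet> \<beta> = 0" "(\<beta> \<times> n) \<bullet> n = 0" "(n \<times> \<alpha>) \<bullet> n = 0"
    "n \<bullet> \<alpha> = 0" "n \<bullet> \<beta> = 0"
    by (simp_all add: n_def dot_cross_self inner_commute)
  \<comment> \<open>(beta x n, n x alpha, n) / N is the basis dual to (alpha, beta, n).\<close>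
  ultimately show ?thesis using \<open>N \<noteq> 0\<close>
    by (intro exI[of _ "(1 / N) *\<^sub>R (r *\<^sub>R (\<beta> \<times> n) + s *\<^sub>R (n \<times> \<alpha>) + t *\<^sub>R n)"])
      (simp add: inner_add_left N_def[symmetric] flip: n_def)
qed

definition quat_mat :: "real \<Rightarrow> real^3 \<Rightarrow> complex^2^2" where
  "quat_mat q v = (\<chi> i j.
     if i = 1 then (if j = 1 then Complex q (v$1) else Complex (v$2) (v$3))
     else (if j = 1 then Complex (- v$2) (v$3) else Complex q (- v$1)))"

lemma quat_mat_nth [simp]:
  "quat_mat q v $ 1 $ 1 = Complex q (v$1)" "quat_mat q v $ 1 $ 2 = Complex (v$2) (v$3)"
  "quat_mat q v $ 2 $ 1 = Complex (- v$2) (v$3)" "quat_mat q v $ 2 $ 2 = Complex q (- v$1)"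
  by (simp_all add: quat_mat_def)

lemma quat_mat_mult:
  "quat_mat p v ** quat_mat q w = quat_mat (p * q - v \<bullet> w) (p *\<^sub>R w + q *\<^sub>R v + v \<times> w)"
  by (simp add: vec_eq_iff forall_2 matrix_matrix_mult_def sum_2 cross3_simps complex_eq_iff)

lemma quat_mat_one: "quat_mat 1 0 = mat 1"
  by (simp add: vec_eq_iff forall_2 mat_def complex_eq_iff)

lemma trace_quat_mat: "trace (quat_mat q v) = complex_of_real (2 * q)"
  by (simp add: trace_def sum_2 complex_eq_iff)

lemma conj_transpose_quat_mat: "conj_transpose (quat_mat q v) = quat_mat q (- v)"
  by (simp add: conj_transpose_def vec_eq_iff forall_2 complex_eq_iff)

lemma det_quat_mat: "det (quat_mat q v) = complex_of_real (q\<^sup>2 + v \<bullet> v)"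
  by (simp add: det_2 inner_vec_def sum_3 complex_eq_iff power2_eq_square)

lemma quat_norm_mult:
  "(p * q - v \<bullet> w)\<^sup>2 + (p *\<^sub>R w + q *\<^sub>R v + v \<times> w) \<bullet> (p *\<^sub>R w + q *\<^sub>R v + v \<times> w)
     = (p\<^sup>2 + v \<bullet> v) * (q\<^sup>2 + w \<bullet> w)"
  by (simp add: inner_vec_def sum_3 cross3_def power2_eq_square) algebra

lemma quat_mat_mult_conj:
  "quat_mat q v ** quat_mat q (- v) = quat_mat (q\<^sup>2 + v \<bullet> v) 0"
  by (simp add: quat_mat_mult power2_eq_square)

lemma quat_mat_in_SU2: "q\<^sup>2 + v \<bullet> v = 1 \<Longrightarrow> quat_mat q v \<in> SU2"
  by (simp add: SU2_def conj_transpose_quat_mat quat_mat_mult_conj quat_mat_one det_quat_mat)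

lemma SU2_imp_quat_mat:
  assumes "M \<in> SU2"
  obtains q v where "M = quat_mat q v" and "q\<^sup>2 + v \<bullet> v = 1"
proof -
  define p where "p = M$1$1"
  define q where "q = M$1$2"
  define r where "r = M$2$1"
  define s where "s = M$2$2"
  have unitary: "M ** conj_transpose M = mat 1" and det: "det M = 1"
    using assms by (auto simp: SU2_def)
  have row1: "p * cnj p + q * cnj q = 1"
    using arg_cong[OF unitary, of "\<lambda>N. N$1$1"]
    by (simp add: matrix_matrix_mult_def sum_2 conj_transpose_def mat_def p_def q_def)
  have rows_orth: "cnj p * r + cnj q * s = 0"
    using arg_cong[OF unitary, of "\<lambda>N. cnj (N$1$2)"]
    by (simp add: matrix_matrix_mult_def sum_2 conj_transpose_def mat_def p_def q_def r_def s_def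
        mult.commute)
  have det': "p * s - q * r = 1" using det by (simp add: det_2 p_def q_def r_def s_def)
  have "s - cnj p = s * (p * cnj p + q * cnj q) - cnj p * (p * s - q * r)"
    using row1 det' by simp
  also have "\<dots> = q * (cnj p * r + cnj q * s)" by algebra
  finally have s: "s = cnj p" using rows_orth by simp
  have "r + cnj q = r * (p * cnj p + q * cnj q) + cnj q * (p * s - q * r)"
    using row1 det' by simp
  also have "\<dots> = p * (cnj p * r + cnj q * s)" by algebra
  finally have r: "r = - cnj q" using rows_orth by (simp add: eq_neg_iff_add_eq_0)
  show thesis
  proof
    show "M = quat_mat (Re p) (vector [Im p, Re q, Im q])"
      using s r by (simp add: vec_eq_iff forall_2 p_def q_def r_def s_def complex_eq_iff)
    show "(Re p)\<^sup>2 + vector [Im p, Re q, Im q] \<bullet> (vector [Im p, Re q, Im q] :: real^3) = 1"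
      using arg_cong[OF row1, of Re] by (simp add: inner_vec_def sum_3 power2_eq_square)
  qed
qed

lemma SU2_with_trace_imp_quat_mat:
  assumes "M \<in> SU2" and "trace M = complex_of_real t"
  obtains v where "M = quat_mat (t / 2) v" and "(t / 2)\<^sup>2 + v \<bullet> v = 1"
proof -
  obtain q v where M: "M = quat_mat q v" and "q\<^sup>2 + v \<bullet> v = 1"
    using SU2_imp_quat_mat[OF assms(1)] .
  moreover have "q = t / 2"
    using assms(2) unfolding M trace_quat_mat of_real_eq_iff by simp
  ultimately show thesis using that by blast
qed

(* alpha, beta, c are the imaginary parts of A = a/2 + alpha, B = b/2 + beta and C = c; the last
   conjunct is Re (A B C) = 0, i.e. tr D = 0 for D = (A B C)^-1. *)
definition rep_data :: "real \<Rightarrow> real \<Rightarrow> real^3 \<Rightarrow> real^3 \<Rightarrow> real^3 \<Rightarrow> bool" where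
  "rep_data a b \<alpha> \<beta> c \<longleftrightarrow>
     (a / 2)\<^sup>2 + \<alpha> \<bullet> \<alpha> = 1 \<and> (b / 2)\<^sup>2 + \<beta> \<bullet> \<beta> = 1 \<and> c \<bullet> c = 1 \<and>
     ((a / 2) *\<^sub>R \<beta> + (b / 2) *\<^sub>R \<alpha> + \<alpha> \<times> \<beta>) \<bullet> c = 0"

definition trace_triple :: "real \<Rightarrow> real \<Rightarrow> real^3 \<Rightarrow> real^3 \<Rightarrow> real^3 \<Rightarrow> real \<times> real \<times> real" where
  "trace_triple a b \<alpha> \<beta> c = (a * b / 2 - 2 * (\<alpha> \<bullet> \<beta>), - 2 * (\<beta> \<bullet> c), - 2 * (c \<bullet> \<alpha>))"

lemma E_kappa_imp_rep_data:
  assumes "p \<in> E_kappa (a, b, 0, 0)"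
  obtains \<alpha> \<beta> c where "rep_data a b \<alpha> \<beta> c" and "p = trace_triple a b \<alpha> \<beta> c"
proof -
  obtain x y z where p: "p = (x, y, z)" by (cases p)
  obtain A B C D where SU2: "A \<in> SU2" "B \<in> SU2" "C \<in> SU2" "D \<in> SU2"
    and ABCD: "A ** B ** C ** D = mat 1"
    and traces: "trace A = complex_of_real a" "trace B = complex_of_real b"
      "trace C = complex_of_real 0" "trace D = 0"
      "trace (A ** B) = complex_of_real x" "trace (B ** C) = complex_of_real y"
      "trace (C ** A) = complex_of_real z"
    using assms by (auto simp: E_kappa_def p)
  obtain \<alpha> where A: "A = quat_mat (a / 2) \<alpha>" and \<alpha>: "(a / 2)\<^sup>2 + \<alpha> \<bullet> \<alpha> = 1"
    using SU2_with_trace_imp_quat_mat[OF SU2(1) traces(1)] .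
  obtain \<beta> where B: "B = quat_mat (b / 2) \<beta>" and \<beta>: "(b / 2)\<^sup>2 + \<beta> \<bullet> \<beta> = 1"
    using SU2_with_trace_imp_quat_mat[OF SU2(2) traces(2)] .
  obtain c where C: "C = quat_mat 0 c" and c: "c \<bullet> c = 1"
    using SU2_with_trace_imp_quat_mat[OF SU2(3) traces(3)] by auto
  have "A ** B ** C = A ** B ** C ** (D ** conj_transpose D)"
    using SU2(4) by (simp add: SU2_def)
  also have "\<dots> = conj_transpose D"
    using ABCD by (simp add: matrix_mul_assoc)
  finally have "trace (A ** B ** C) = cnj (trace D)"
    by (simp add: trace_def conj_transpose_def sum_2)
  then have "((a / 2) *\<^sub>R \<beta> + (b / 2) *\<^sub>R \<alpha> + \<alpha> \<times> \<beta>) \<bullet> c = 0"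
    using traces(4) by (simp add: A B C quat_mat_mult trace_quat_mat)
  then have "rep_data a b \<alpha> \<beta> c"
    using \<alpha> \<beta> c by (simp add: rep_data_def)
  moreover have "p = trace_triple a b \<alpha> \<beta> c"
    using traces(5-7) unfolding A B C quat_mat_mult trace_quat_mat of_real_eq_iff
    by (auto simp: p trace_triple_def inner_commute)
  ultimately show thesis using that by blast
qed

lemma rep_data_imp_E_kappa:
  assumes "rep_data a b \<alpha> \<beta> c"
  shows "trace_triple a b \<alpha> \<beta> c \<in> E_kappa (a, b, 0, 0)"
proof -
  have \<alpha>: "(a / 2)\<^sup>2 + \<alpha> \<bullet> \<alpha> = 1" and \<beta>: "(b / 2)\<^sup>2 + \<beta> \<bullet> \<beta> = 1" and c: "0\<^sup>2 + c \<bullet> c = 1"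
    and orth: "((a / 2) *\<^sub>R \<beta> + (b / 2) *\<^sub>R \<alpha> + \<alpha> \<times> \<beta>) \<bullet> c = 0"
    using assms by (auto simp: rep_data_def)
  define p0 where "p0 = (a / 2) * (b / 2) - \<alpha> \<bullet> \<beta>"
  define pv where "pv = (a / 2) *\<^sub>R \<beta> + (b / 2) *\<^sub>R \<alpha> + \<alpha> \<times> \<beta>"
  define w where "w = p0 *\<^sub>R c + pv \<times> c"
  have AB_unit: "p0\<^sup>2 + pv \<bullet> pv = 1"
    using quat_norm_mult[of "a / 2" "b / 2" \<alpha> \<beta>] \<alpha> \<beta> by (simp add: p0_def pv_def)
  have w_unit: "0\<^sup>2 + w \<bullet> w = 1"
    using quat_norm_mult[of p0 0 pv c] AB_unit c orth by (simp add: w_def pv_def)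
  have ABC: "quat_mat (a / 2) \<alpha> ** quat_mat (b / 2) \<beta> ** quat_mat 0 c = quat_mat 0 w"
    using orth by (simp add: quat_mat_mult p0_def pv_def w_def)
  have ABCD: "quat_mat (a / 2) \<alpha> ** quat_mat (b / 2) \<beta> ** quat_mat 0 c ** quat_mat 0 (- w) = mat 1"
    using w_unit by (simp only: ABC quat_mat_mult_conj quat_mat_one)
  have traces:
    "trace (quat_mat (a / 2) \<alpha>) = complex_of_real a" "trace (quat_mat (b / 2) \<beta>) = complex_of_real b"
    "trace (quat_mat 0 c) = complex_of_real 0" "trace (quat_mat 0 (- w)) = complex_of_real 0"
    "trace (quat_mat (a / 2) \<alpha> ** quat_mat (b / 2) \<beta>) = complex_of_real (a * b / 2 - 2 * (\<alpha> \<bullet> \<beta>))"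
    "trace (quat_mat (b / 2) \<beta> ** quat_mat 0 c) = complex_of_real (- 2 * (\<beta> \<bullet> c))"
    "trace (quat_mat 0 c ** quat_mat (a / 2) \<alpha>) = complex_of_real (- 2 * (c \<bullet> \<alpha>))"
    by (simp_all add: quat_mat_mult trace_quat_mat)
  have D: "quat_mat 0 (- w) \<in> SU2"
    using w_unit by (simp add: quat_mat_in_SU2)
  show ?thesis
    unfolding E_kappa_def trace_triple_def prod.case mem_Collect_eq
    using quat_mat_in_SU2[OF \<alpha>] quat_mat_in_SU2[OF \<beta>] quat_mat_in_SU2[OF c] D ABCD traces
    by blast
qed

lemma E_kappa_obtain_AB:
  assumes "(x, y, z) \<in> E_kappa (a, b, 0, 0)"
  obtains \<alpha> \<beta> :: "real^3" where "(a / 2)\<^sup>2 + \<alpha> \<bullet> \<alpha> = 1" and "(b / 2)\<^sup>2 + \<beta> \<bullet> \<beta> = 1"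
    and "x = a * b / 2 - 2 * (\<alpha> \<bullet> \<beta>)"
proof -
  obtain \<alpha> \<beta> c where "rep_data a b \<alpha> \<beta> c" and "(x, y, z) = trace_triple a b \<alpha> \<beta> c"
    using E_kappa_imp_rep_data[OF assms] .
  then show thesis
    using that[of \<alpha> \<beta>] by (simp add: rep_data_def trace_triple_def)
qed

(* For kappa = (a, b, 0, 0) the equation of the surface containing E_kappa reads
   y^2 + z^2 + x y z = level_rhs a b x. *)
definition level_rhs :: "real \<Rightarrow> real \<Rightarrow> real \<Rightarrow> real" where
  "level_rhs a b x = a * b * x - x\<^sup>2 - a\<^sup>2 - b\<^sup>2 + 4"

lemma level_rhs_eq_inner_cross3:
  assumes "(a / 2)\<^sup>2 + \<alpha> \<bullet> \<alpha> = 1" and "(b / 2)\<^sup>2 + \<beta> \<bullet> \<beta> = 1"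
    and "x = a * b / 2 - 2 * (\<alpha> \<bullet> \<beta>)"
  shows "level_rhs a b x = 4 * ((\<alpha> \<times> \<beta>) \<bullet> (\<alpha> \<times> \<beta>))"
proof -
  have \<alpha>: "\<alpha> \<bullet> \<alpha> = 1 - (a / 2)\<^sup>2" and \<beta>: "\<beta> \<bullet> \<beta> = 1 - (b / 2)\<^sup>2"
    and \<alpha>\<beta>: "\<alpha> \<bullet> \<beta> = a * b / 4 - x / 2"
    using assms by linarith+
  show ?thesis
    unfolding inner_cross3_self level_rhs_def \<alpha> \<beta> \<alpha>\<beta> by (simp add: power2_eq_square algebra_simps)
qed

lemma trace_product_sq_le_4:
  fixes \<alpha> \<beta> :: "real^3"
  assumes "(a / 2)\<^sup>2 + \<alpha> \<bullet> \<alpha> = 1" and "(b / 2)\<^sup>2 + \<beta> \<bullet> \<beta> = 1"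
  shows "(a * b / 2 - 2 * (\<alpha> \<bullet> \<beta>))\<^sup>2 \<le> 4"
proof -
  define v where "v = (a / 2) *\<^sub>R \<beta> + (b / 2) *\<^sub>R \<alpha> + \<alpha> \<times> \<beta>"
  have "((a / 2) * (b / 2) - \<alpha> \<bullet> \<beta>)\<^sup>2 + v \<bullet> v = 1"
    using quat_norm_mult[of "a / 2" "b / 2" \<alpha> \<beta>] assms by (simp add: v_def)
  then have "((a / 2) * (b / 2) - \<alpha> \<bullet> \<beta>)\<^sup>2 \<le> 1"
    using inner_ge_zero[of v] by linarith
  then show ?thesis
    by (simp add: power2_eq_square algebra_simps)
qed

lemma rep_data_on_cubic:
  assumes "rep_data a b \<alpha> \<beta> c" and "trace_triple a b \<alpha> \<beta> c = (x, y, z)"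
  shows "y\<^sup>2 + z\<^sup>2 + x * y * z = level_rhs a b x"
proof -
  have unit: "(a / 2)\<^sup>2 + \<alpha> \<bullet> \<alpha> = 1" "(b / 2)\<^sup>2 + \<beta> \<bullet> \<beta> = 1" "c \<bullet> c = 1"
    and orth: "((a / 2) *\<^sub>R \<beta> + (b / 2) *\<^sub>R \<alpha> + \<alpha> \<times> \<beta>) \<bullet> c = 0"
    and x: "x = a * b / 2 - 2 * (\<alpha> \<bullet> \<beta>)" and y: "c \<bullet> \<beta> = - y / 2" and z: "c \<bullet> \<alpha> = - z / 2"
    using assms by (auto simp: rep_data_def trace_triple_def inner_commute)
  have "((a / 2) *\<^sub>R \<beta> + (b / 2) *\<^sub>R \<alpha> + \<alpha> \<times> \<beta>) \<bullet> c
      = (a / 2) * (c \<bullet> \<beta>) + (b / 2) * (c \<bullet> \<alpha>) + c \<bullet> (\<alpha> \<times> \<beta>)"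
    by (simp add: inner_add_left inner_add_right inner_commute)
  then have cross: "c \<bullet> (\<alpha> \<times> \<beta>) = (a * y + b * z) / 4"
    using orth y z by (simp add: field_simps)
  have gram: "(\<alpha> \<bullet> \<alpha>) * (\<beta> \<bullet> \<beta>) - (\<alpha> \<bullet> \<beta>)\<^sup>2 =
      (\<beta> \<bullet> \<beta>) * (z / 2)\<^sup>2 - 2 * (\<alpha> \<bullet> \<beta>) * (z / 2) * (y / 2) + (\<alpha> \<bullet> \<alpha>) * (y / 2)\<^sup>2
      + ((a * y + b * z) / 4)\<^sup>2"
    using gram_det_cross3[of c \<alpha> \<beta>] unfolding cross unit(3) y z by simp
  have \<alpha>: "\<alpha> \<bullet> \<alpha> = 1 - (a / 2)\<^sup>2" and \<beta>: "\<beta> \<bullet> \<beta> = 1 - (b / 2)\<^sup>2"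
    and \<alpha>\<beta>: "\<alpha> \<bullet> \<beta> = a * b / 4 - x / 2"
    using unit x by linarith+
  show ?thesis
    using gram unfolding \<alpha> \<beta> \<alpha>\<beta> level_rhs_def by (simp add: power2_eq_square field_simps)
qed

lemma cubic_imp_rep_data:
  assumes \<alpha>: "(a / 2)\<^sup>2 + \<alpha> \<bullet> \<alpha> = 1" and \<beta>: "(b / 2)\<^sup>2 + \<beta> \<bullet> \<beta> = 1"
    and x: "x = a * b / 2 - 2 * (\<alpha> \<bullet> \<beta>)" and "x\<^sup>2 < 4"
    and on_cubic: "y\<^sup>2 + z\<^sup>2 + x * y * z = level_rhs a b x"
  shows "\<exists>c. rep_data a b \<alpha> \<beta> c \<and> trace_triple a b \<alpha> \<beta> c = (x, y, z)"
proof -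
  have rhs: "level_rhs a b x = 4 * ((\<alpha> \<times> \<beta>) \<bullet> (\<alpha> \<times> \<beta>))"
    using level_rhs_eq_inner_cross3[OF \<alpha> \<beta> x] .
  have "\<exists>c. c \<bullet> c = 1 \<and> c \<bullet> \<alpha> = - z / 2 \<and> c \<bullet> \<beta> = - y / 2 \<and> c \<bullet> (\<alpha> \<times> \<beta>) = (a * y + b * z) / 4"
  proof (cases "\<alpha> \<times> \<beta> = 0")
    case True
    then have "y\<^sup>2 + z\<^sup>2 + x * y * z = 0"
      using on_cubic rhs by simp
    then have "y = 0 \<and> z = 0"
      using cubic_slice_zero[OF \<open>x\<^sup>2 < 4\<close>] by blast
    moreover obtain c where "c \<bullet> c = 1" "c \<bullet> \<alpha> = 0" "c \<bullet> \<beta> = 0"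
      using exists_unit_orthogonal2 by blast
    ultimately show ?thesis using True by auto
  next
    case False
    then obtain c where c: "c \<bullet> \<alpha> = - z / 2" "c \<bullet> \<beta> = - y / 2" "c \<bullet> (\<alpha> \<times> \<beta>) = (a * y + b * z) / 4"
      using exists_inner_eq_cross3_basis by blast
    have \<alpha>\<alpha>: "\<alpha> \<bullet> \<alpha> = 1 - (a / 2)\<^sup>2" and \<beta>\<beta>: "\<beta> \<bullet> \<beta> = 1 - (b / 2)\<^sup>2"
      and \<alpha>\<beta>: "\<alpha> \<bullet> \<beta> = a * b / 4 - x / 2"
      using \<alpha> \<beta> x by linarith+
    have gram_lhs: "(1 - (a / 2)\<^sup>2) * (1 - (b / 2)\<^sup>2) - (a * b / 4 - x / 2)\<^sup>2 = level_rhs a b x / 4"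
      by (simp add: level_rhs_def power2_eq_square field_simps)
    have gram_rhs: "(1 - (b / 2)\<^sup>2) * (- z / 2)\<^sup>2 - 2 * (a * b / 4 - x / 2) * (- z / 2) * (- y / 2)
        + (1 - (a / 2)\<^sup>2) * (- y / 2)\<^sup>2 + ((a * y + b * z) / 4)\<^sup>2 = (y\<^sup>2 + z\<^sup>2 + x * y * z) / 4"
      by (simp add: power2_eq_square field_simps)
    have "(c \<bullet> c) * (level_rhs a b x / 4) = level_rhs a b x / 4"
      using gram_det_cross3[of c \<alpha> \<beta>] unfolding c \<alpha>\<alpha> \<beta>\<beta> \<alpha>\<beta> gram_lhs gram_rhs on_cubic .
    moreover have "level_rhs a b x \<noteq> 0" using False rhs by simp
    ultimately have "c \<bullet> c = 1" by simp
    with c show ?thesis by blast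
  qed
  then obtain c where c: "c \<bullet> c = 1" "c \<bullet> \<alpha> = - z / 2" "c \<bullet> \<beta> = - y / 2"
    "c \<bullet> (\<alpha> \<times> \<beta>) = (a * y + b * z) / 4"
    by blast
  have "((a / 2) *\<^sub>R \<beta> + (b / 2) *\<^sub>R \<alpha> + \<alpha> \<times> \<beta>) \<bullet> c
      = (a / 2) * (c \<bullet> \<beta>) + (b / 2) * (c \<bullet> \<alpha>) + c \<bullet> (\<alpha> \<times> \<beta>)"
    by (simp add: inner_add_left inner_add_right inner_commute)
  also have "\<dots> = 0" unfolding c by (simp add: field_simps)
  finally have "rep_data a b \<alpha> \<beta> c"
    using \<alpha> \<beta> c by (simp add: rep_data_def)
  moreover have "trace_triple a b \<alpha> \<beta> c = (x, y, z)"
    using x c by (simp add: trace_triple_def inner_commute)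
  ultimately show ?thesis by blast
qed

lemma trace_sq_eq_4_imp_parallel:
  fixes \<alpha> \<beta> :: "real^3"
  assumes \<alpha>: "(a / 2)\<^sup>2 + \<alpha> \<bullet> \<alpha> = 1" and \<beta>: "(b / 2)\<^sup>2 + \<beta> \<bullet> \<beta> = 1"
    and x: "x = a * b / 2 - 2 * (\<alpha> \<bullet> \<beta>)" and "x\<^sup>2 = 4"
  shows "\<beta> = - (x / 2) *\<^sub>R \<alpha>" and "b = (x / 2) * a"
proof -
  define e where "e = x / 2"
  have "e * e = 1" using \<open>x\<^sup>2 = 4\<close> by (simp add: e_def power2_eq_square)
  have "(b / 2 - e * (a / 2))\<^sup>2 + (\<beta> + e *\<^sub>R \<alpha>) \<bullet> (\<beta> + e *\<^sub>R \<alpha>)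
      = ((b / 2)\<^sup>2 + \<beta> \<bullet> \<beta>) + (e * e) * ((a / 2)\<^sup>2 + \<alpha> \<bullet> \<alpha>) - 2 * e * ((a / 2) * (b / 2) - \<alpha> \<bullet> \<beta>)"
    by (simp add: inner_add_left inner_add_right inner_commute algebra_simps power2_eq_square)
  also have "\<dots> = 0"
  proof -
    have "(a / 2) * (b / 2) - \<alpha> \<bullet> \<beta> = e" using x by (simp add: e_def)
    then show ?thesis unfolding \<alpha> \<beta> by (simp add: \<open>e * e = 1\<close> mult.assoc)
  qed
  finally have "(b / 2 - e * (a / 2))\<^sup>2 = 0" "(\<beta> + e *\<^sub>R \<alpha>) \<bullet> (\<beta> + e *\<^sub>R \<alpha>) = 0"
    using zero_le_power2[of "b / 2 - e * (a / 2)"] inner_ge_zero[of "\<beta> + e *\<^sub>R \<alpha>"] by linarith+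
  then show "\<beta> = - (x / 2) *\<^sub>R \<alpha>" "b = (x / 2) * a"
    by (simp_all add: e_def eq_neg_iff_add_eq_0)
qed

lemma rep_data_degenerate_form:
  assumes "rep_data a b \<alpha> \<beta> c" and "trace_triple a b \<alpha> \<beta> c = (x, y, z)" and "x\<^sup>2 = 4"
  shows "\<exists>t. y = - x * sqrt (1 - (a / 2)\<^sup>2) * cos t \<and> z = 2 * sqrt (1 - (a / 2)\<^sup>2) * cos t"
proof -
  have \<alpha>: "(a / 2)\<^sup>2 + \<alpha> \<bullet> \<alpha> = 1" and \<beta>: "(b / 2)\<^sup>2 + \<beta> \<bullet> \<beta> = 1" and c: "norm c = 1"
    and x: "x = a * b / 2 - 2 * (\<alpha> \<bullet> \<beta>)" and y: "y = - 2 * (\<beta> \<bullet> c)" and z: "z = - 2 * (c \<bullet> \<alpha>)"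
    using assms(1,2) by (auto simp: rep_data_def trace_triple_def norm_eq_sqrt_inner)
  have "\<beta> = - (x / 2) *\<^sub>R \<alpha>"
    using trace_sq_eq_4_imp_parallel(1)[OF \<alpha> \<beta> x \<open>x\<^sup>2 = 4\<close>] .
  then have y': "y = x * (c \<bullet> \<alpha>)" using y by (simp add: inner_commute)
  have "norm \<alpha> = sqrt (1 - (a / 2)\<^sup>2)" using \<alpha> by (simp add: norm_eq_sqrt_inner)
  then have "\<bar>- (c \<bullet> \<alpha>)\<bar> \<le> sqrt (1 - (a / 2)\<^sup>2)"
    using Cauchy_Schwarz_ineq2[of c \<alpha>] c by simp
  then obtain t where "- (c \<bullet> \<alpha>) = sqrt (1 - (a / 2)\<^sup>2) * cos t"
    using abs_le_imp_eq_scaled_cos by blast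
  then have "c \<bullet> \<alpha> = - (sqrt (1 - (a / 2)\<^sup>2) * cos t)" by linarith
  then show ?thesis using y' z by (intro exI[of _ t]) simp
qed

lemma degenerate_imp_rep_data:
  fixes \<alpha> \<beta> :: "real^3"
  assumes \<alpha>: "(a / 2)\<^sup>2 + \<alpha> \<bullet> \<alpha> = 1" and \<beta>: "(b / 2)\<^sup>2 + \<beta> \<bullet> \<beta> = 1"
    and x: "x = a * b / 2 - 2 * (\<alpha> \<bullet> \<beta>)" and "x\<^sup>2 = 4"
  shows "\<exists>c. rep_data a b \<alpha> \<beta> c \<and>
    trace_triple a b \<alpha> \<beta> c = (x, - x * sqrt (1 - (a / 2)\<^sup>2) * cos t, 2 * sqrt (1 - (a / 2)\<^sup>2) * cos t)"
proof -
  define \<rho> where "\<rho> = sqrt (1 - (a / 2)\<^sup>2)"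
  have \<beta>\<alpha>: "\<beta> = - (x / 2) *\<^sub>R \<alpha>" and b: "b = (x / 2) * a"
    using trace_sq_eq_4_imp_parallel[OF \<alpha> \<beta> x \<open>x\<^sup>2 = 4\<close>] by simp_all
  have "norm \<alpha> = \<rho>" using \<alpha> by (simp add: norm_eq_sqrt_inner \<rho>_def)
  then have "\<bar>- \<rho> * cos t\<bar> \<le> norm \<alpha>"
    using abs_cos_le_one[of t] norm_ge_zero[of \<alpha>] by (simp add: abs_mult mult_left_le)
  then obtain c where c: "c \<bullet> c = 1" "c \<bullet> \<alpha> = - \<rho> * cos t"
    using exists_unit_inner_eq by blast
  have "(a / 2) *\<^sub>R \<beta> + (b / 2) *\<^sub>R \<alpha> + \<alpha> \<times> \<beta> = 0"
    unfolding \<beta>\<alpha> b by (simp add: cross_mult_right)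
  then have "rep_data a b \<alpha> \<beta> c" using \<alpha> \<beta> c by (simp add: rep_data_def)
  moreover have "trace_triple a b \<alpha> \<beta> c = (x, - x * \<rho> * cos t, 2 * \<rho> * cos t)"
    using x c unfolding trace_triple_def \<beta>\<alpha> by (simp add: inner_commute)
  ultimately show ?thesis unfolding \<rho>_def by blast
qed

lemma E_kappa_slice_bounds:
  assumes "(x, y, z) \<in> E_kappa (a, b, 0, 0)"
  shows "x\<^sup>2 \<le> 4" and "level_rhs a b x \<ge> 0"
proof -
  obtain \<alpha> \<beta> :: "real^3" where \<alpha>: "(a / 2)\<^sup>2 + \<alpha> \<bullet> \<alpha> = 1" and \<beta>: "(b / 2)\<^sup>2 + \<beta> \<bullet> \<beta> = 1"
    and x: "x = a * b / 2 - 2 * (\<alpha> \<bullet> \<beta>)"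
    using E_kappa_obtain_AB[OF assms] .
  show "x\<^sup>2 \<le> 4" using trace_product_sq_le_4[OF \<alpha> \<beta>] x by simp
  show "level_rhs a b x \<ge> 0" using level_rhs_eq_inner_cross3[OF \<alpha> \<beta> x] by simp
qed

lemma X_level_nondegenerate:
  assumes "(x, y0, z0) \<in> E_kappa (a, b, 0, 0)" and "x\<^sup>2 < 4"
  shows "X_level (a, b, 0, 0) x = {(x, y, z) | y z. y\<^sup>2 + z\<^sup>2 + x * y * z = level_rhs a b x}"
proof (intro equalityI subsetI)
  fix p assume "p \<in> X_level (a, b, 0, 0) x"
  then obtain y z where p: "p = (x, y, z)" and "(x, y, z) \<in> E_kappa (a, b, 0, 0)"
    unfolding X_level_def by (cases p) auto
  then obtain \<alpha> \<beta> c where "rep_data a b \<alpha> \<beta> c" and "(x, y, z) = trace_triple a b \<alpha> \<beta> c"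
    using E_kappa_imp_rep_data by blast
  then show "p \<in> {(x, y, z) | y z. y\<^sup>2 + z\<^sup>2 + x * y * z = level_rhs a b x}"
    using rep_data_on_cubic p by fastforce
next
  fix p assume "p \<in> {(x, y, z) | y z. y\<^sup>2 + z\<^sup>2 + x * y * z = level_rhs a b x}"
  then obtain y z where p: "p = (x, y, z)" and on_cubic: "y\<^sup>2 + z\<^sup>2 + x * y * z = level_rhs a b x"
    by blast
  obtain \<alpha> \<beta> :: "real^3" where \<alpha>: "(a / 2)\<^sup>2 + \<alpha> \<bullet> \<alpha> = 1" and \<beta>: "(b / 2)\<^sup>2 + \<beta> \<bullet> \<beta> = 1"
    and x: "x = a * b / 2 - 2 * (\<alpha> \<bullet> \<beta>)"
    using E_kappa_obtain_AB[OF assms(1)] .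
  obtain c where "rep_data a b \<alpha> \<beta> c" and "trace_triple a b \<alpha> \<beta> c = (x, y, z)"
    using cubic_imp_rep_data[OF \<alpha> \<beta> x \<open>x\<^sup>2 < 4\<close> on_cubic] by blast
  then show "p \<in> X_level (a, b, 0, 0) x"
    using rep_data_imp_E_kappa p by (fastforce simp: X_level_def)
qed

lemma X_level_degenerate:
  assumes "(x, y0, z0) \<in> E_kappa (a, b, 0, 0)" and "x\<^sup>2 = 4"
  shows "X_level (a, b, 0, 0) x =
    (\<lambda>t. (x, - x * sqrt (1 - (a / 2)\<^sup>2) * cos t, 2 * sqrt (1 - (a / 2)\<^sup>2) * cos t)) ` UNIV"
proof (intro equalityI subsetI)
  fix p assume "p \<in> X_level (a, b, 0, 0) x"
  then obtain y z where p: "p = (x, y, z)" and "(x, y, z) \<in> E_kappa (a, b, 0, 0)"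
    unfolding X_level_def by (cases p) auto
  then obtain \<alpha> \<beta> c where "rep_data a b \<alpha> \<beta> c" and "(x, y, z) = trace_triple a b \<alpha> \<beta> c"
    using E_kappa_imp_rep_data by blast
  then obtain t where "y = - x * sqrt (1 - (a / 2)\<^sup>2) * cos t" "z = 2 * sqrt (1 - (a / 2)\<^sup>2) * cos t"
    using rep_data_degenerate_form \<open>x\<^sup>2 = 4\<close> by metis
  then show "p \<in> (\<lambda>t. (x, - x * sqrt (1 - (a / 2)\<^sup>2) * cos t, 2 * sqrt (1 - (a / 2)\<^sup>2) * cos t)) ` UNIV"
    using p by blast
next
  fix p assume "p \<in> (\<lambda>t. (x, - x * sqrt (1 - (a / 2)\<^sup>2) * cos t, 2 * sqrt (1 - (a / 2)\<^sup>2) * cos t)) ` UNIV"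
  then obtain t where p: "p = (x, - x * sqrt (1 - (a / 2)\<^sup>2) * cos t, 2 * sqrt (1 - (a / 2)\<^sup>2) * cos t)"
    by blast
  obtain \<alpha> \<beta> :: "real^3" where \<alpha>: "(a / 2)\<^sup>2 + \<alpha> \<bullet> \<alpha> = 1" and \<beta>: "(b / 2)\<^sup>2 + \<beta> \<bullet> \<beta> = 1"
    and x: "x = a * b / 2 - 2 * (\<alpha> \<bullet> \<beta>)"
    using E_kappa_obtain_AB[OF assms(1)] .
  obtain c where "rep_data a b \<alpha> \<beta> c" and "trace_triple a b \<alpha> \<beta> c = p"
    using degenerate_imp_rep_data[OF \<alpha> \<beta> x \<open>x\<^sup>2 = 4\<close>, of t] p by blast
  then show "p \<in> X_level (a, b, 0, 0) x"
    using rep_data_imp_E_kappa p by (fastforce simp: X_level_def)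
qed

lemma X_level_ellipse_meets_axes:
  assumes "X_level (a, b, 0, 0) x \<noteq> {}"
  shows "ellipse_centered (X_level (a, b, 0, 0) x) (x, 0, 0) \<and>
    (\<exists>z. (x, 0, z) \<in> X_level (a, b, 0, 0) x) \<and> (\<exists>y. (x, y, 0) \<in> X_level (a, b, 0, 0) x)"
proof -
  obtain y0 z0 where E: "(x, y0, z0) \<in> E_kappa (a, b, 0, 0)"
    using assms by (auto simp: X_level_def)
  consider "x\<^sup>2 < 4" | "x\<^sup>2 = 4" using E_kappa_slice_bounds(1)[OF E] by linarith
  then show ?thesis
  proof cases
    case 1
    define K where "K = level_rhs a b x"
    have "K \<ge> 0" using E_kappa_slice_bounds(2)[OF E] by (simp add: K_def)
    have X: "X_level (a, b, 0, 0) x = {(x, y, z) | y z. y\<^sup>2 + z\<^sup>2 + x * y * z = K}"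
      using X_level_nondegenerate[OF E 1] by (simp add: K_def)
    have "ellipse_centered (X_level (a, b, 0, 0) x) (x, 0, 0)"
      unfolding X cubic_slice_ellipse[OF 1 \<open>K \<ge> 0\<close>] ellipse_centered_def by blast
    moreover have "(x, 0, sqrt K) \<in> X_level (a, b, 0, 0) x" "(x, sqrt K, 0) \<in> X_level (a, b, 0, 0) x"
      unfolding X using \<open>K \<ge> 0\<close> by simp_all
    ultimately show ?thesis by blast
  next
    case 2
    define \<rho> where "\<rho> = sqrt (1 - (a / 2)\<^sup>2)"
    have "X_level (a, b, 0, 0) x = (\<lambda>t. (x, - x * \<rho> * cos t, 2 * \<rho> * cos t)) ` UNIV"
      using X_level_degenerate[OF E 2] by (simp add: \<rho>_def)
    also have "\<dots> = (\<lambda>t. (x, 0, 0) + cos t *\<^sub>R (0, - x * \<rho>, 2 * \<rho>) + sin t *\<^sub>R 0) ` UNIV"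
      by (auto simp: algebra_simps)
    finally have X: "X_level (a, b, 0, 0) x = \<dots>" .
    have "(x, 0, 0) \<in> X_level (a, b, 0, 0) x"
      unfolding X by (auto intro: image_eqI[of _ _ "pi / 2"])
    then show ?thesis
      unfolding ellipse_centered_def by (auto simp only: X)
  qed
qed

theorem lemma6p3:
  fixes a b :: real
  assumes "a \<in> {-2..2}" and "b \<in> {-2..2}"
  shows "(\<forall>x. X_level (a, b, 0, 0) x \<noteq> {} \<longrightarrow>
            ellipse_centered (X_level (a, b, 0, 0) x) (x, 0, 0))
       \<and> (\<forall>x. X_level (a, b, 0, 0) x \<noteq> {} \<longrightarrow>
            Y_level (a, b, 0, 0) 0 \<inter> X_level (a, b, 0, 0) x \<noteq> {} \<and>
            Z_level (a, b, 0, 0) 0 \<inter> X_level (a, b, 0, 0) x \<noteq> {})"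
proof (intro conjI allI impI)
  fix x assume ne: "X_level (a, b, 0, 0) x \<noteq> {}"
  note X = X_level_ellipse_meets_axes[OF ne]
  then show "ellipse_centered (X_level (a, b, 0, 0) x) (x, 0, 0)" ..
  show "Y_level (a, b, 0, 0) 0 \<inter> X_level (a, b, 0, 0) x \<noteq> {}"
    using X by (auto simp: X_level_def Y_level_def)
  show "Z_level (a, b, 0, 0) 0 \<inter> X_level (a, b, 0, 0) x \<noteq> {}"
    using X by (auto simp: X_level_def Z_level_def)
qed

end
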